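(* Let $(X,d)$ be a pointed metric space, let $((x_i,y_i))_{i\in I}$ be a Lipschitz interpolating family in $\widetilde X$ for $\mathrm{Lip}_0(X)$ with Lipschitz interpolation constant $M$, let $T:\mathrm{Lip}_0(X)\to\ell_\infty(I)$ be its Lipschitz interpolating operator, and let $S:\ell_1(I)\to\mathcal F(X)$ be $S(\lambda)=\sum_{i\in I}\lambda_i m_{x_i,y_i}$. The following statements are equivalent: (i) There exists a Beurling set $(f_i)_{i\in I}$ of functions in $\mathrm{Lip}_0(X)$ for $((x_i,y_i))_{i\in I}$. (ii) There exists a bounded linear operator $R:\ell_\infty(I)\to\mathrm{Lip}_0(X)$ which is weak*-to-weak* continuous, with $\|R\|=M$ and $T\circ R=\mathrm{Id}_{\ell_\infty(I)}$. (iii) There exists a bounded linear operator $P:\mathcal F(X)\to\ell_1(I)$ with $\|P\|=M$ and $P\circ S=\mathrm{Id}_{\ell_1(I)}$. (iv) There exists a Lipschitz map $f:X\to\ell_1(I)$ with $f(0)=0$, Lipschitz constant $\|f\|=M$, and $\dfrac{f(x_i)-f(y_i)}{d(x_i,y_i)}=e_i$ for all $i\in I$. (v) There exists a bounded linear operator $R_0:c_0(I)\to\mathrm{Lip}_0(X)$ with $\|R_0\|\leq M$ and $T\circ R_0=\mathrm{Id}_{c_0(I)}$.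
   Context: All spaces are real. $(X,d)$ is a metric space with base point $0$, $\widetilde{X}=\{(x,y)\in X\times X: x\neq y\}$. $\mathrm{Lip}_0(X)$ is the Banach space of Lipschitz $f:X\to\mathbb{R}$ with $f(0)=0$, normed by $\|f\|=\sup_{(x,y)\in\widetilde X}|f(x)-f(y)|/d(x,y)$; similarly for Banach-space-valued maps with $\|\cdot\|$ in place of $|\cdot|$. For $x\in X$, $\delta_x\in\mathrm{Lip}_0(X)^*$ is $\delta_x(f)=f(x)$; the Lipschitz-free space $\mathcal F(X)$ is the closed linear span of $\{\delta_x\}$ in $\mathrm{Lip}_0(X)^*$, and $\mathrm{Lip}_0(X)$ is identified with $\mathcal F(X)^*$ (weak* topology accordingly); $\ell_\infty(I)=\ell_1(I)^*$. For $(x,y)\in\widetilde X$, $m_{x,y}=(\delta_x-\delta_y)/d(x,y)$. $e_i$ are the unit vectors of $\ell_1(I)$. For a family $((x_i,y_i))_{i\in I}$ in $\widetilde X$, $T(f)=\big((f(x_i)-f(y_i))/d(x_i,y_i)\big)_{i\in I}$; the family is Lipschitz interpolating for $\mathrm{Lip}_0(X)$ if $T:\mathrm{Lip}_0(X)\to\ell_\infty(I)$ is surjective, and then its Lipschitz interpolation constant is $M=\inf\{K\geq 1: \forall \alpha\in\ell_\infty(I), \|\alpha\|_\infty\le1,\ \exists f\in\mathrm{Lip}_0(X),\ \|f\|\le K,\ T(f)=\alpha\}$ (note $T$ maps $\mathrm{Lip}_0(X)$ into $\ell_\infty(I)\supseteq c_0(I)$). A Beurling set of functions in $\mathrm{Lip}_0(X)$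 for such a family is a family $(f_i)_{i\in I}$ of functions $f_i:X\to\mathbb R$ with $f_i(0)=0$, $(f_i(x_j)-f_i(y_j))/d(x_j,y_j)=\delta_{ij}$ for all $i,j\in I$, and $\sup_{(x,y)\in\widetilde X}\sum_{i\in I}|f_i(x)-f_i(y)|/d(x,y)\leq M$. *)

theory Defs
  imports "HOL-Analysis.Analysis"
begin

text \<open>All spaces are real function spaces.  X is the metric-space type 'a with base point x0,
  the index set I is the type 'i.\<close>

definition lip_const :: "('b \<Rightarrow> real) \<Rightarrow> ('a::metric_space \<Rightarrow> 'b) \<Rightarrow> ('b \<Rightarrow> 'b \<Rightarrow> 'b) \<Rightarrow> real" where
  "lip_const N f sub = Sup (insert 0 {N (sub (f p) (f q)) / dist p q | p q. p \<noteq> q})"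

definition lipnorm :: "('a::metric_space \<Rightarrow> real) \<Rightarrow> real" where
  "lipnorm f = Sup (insert 0 {\<bar>f p - f q\<bar> / dist p q | p q. p \<noteq> q})"

definition Lip0 :: "'a::metric_space \<Rightarrow> ('a \<Rightarrow> real) set" where
  "Lip0 x0 = {f. f x0 = 0 \<and> (\<exists>K. \<forall>p q. \<bar>f p - f q\<bar> \<le> K * dist p q)}"

definition ell_inf :: "('i \<Rightarrow> real) set" where
  "ell_inf = {\<alpha>. \<exists>K. \<forall>i. \<bar>\<alpha> i\<bar> \<le> K}"

definition linf_norm :: "('i \<Rightarrow> real) \<Rightarrow> real" where
  "linf_norm \<alpha> = Sup (insert 0 (range (\<lambda>i. \<bar>\<alpha> i\<bar>)))"

definition ell_1 :: "('i \<Rightarrow> real) set" where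
  "ell_1 = {\<mu>. (\<lambda>i. \<bar>\<mu> i\<bar>) summable_on UNIV}"

definition l1_norm :: "('i \<Rightarrow> real) \<Rightarrow> real" where
  "l1_norm \<mu> = (\<Sum>\<^sub>\<infinity>i. \<bar>\<mu> i\<bar>)"

definition c_0 :: "('i \<Rightarrow> real) set" where
  "c_0 = {\<alpha>. \<forall>\<epsilon>>0. finite {i. \<epsilon> \<le> \<bar>\<alpha> i\<bar>}}"

text \<open>Elements of Lip_0(X)^* are represented as functionals on 'a \<Rightarrow> real that vanish outside Lip_0(X).\<close>
definition delta :: "'a::metric_space \<Rightarrow> 'a \<Rightarrow> (('a \<Rightarrow> real) \<Rightarrow> real)" where
  "delta x0 p = (\<lambda>f. if f \<in> Lip0 x0 then f p else 0)"

definition mol :: "'a::metric_space \<Rightarrow> 'a \<Rightarrow> 'a \<Rightarrow> (('a \<Rightarrow> real) \<Rightarrow> real)" where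
  "mol x0 p q = (\<lambda>f. (delta x0 p f - delta x0 q f) / dist p q)"

definition dual_norm :: "'a::metric_space \<Rightarrow> (('a \<Rightarrow> real) \<Rightarrow> real) \<Rightarrow> real" where
  "dual_norm x0 \<phi> = Sup (insert 0 {\<bar>\<phi> f\<bar> | f. f \<in> Lip0 x0 \<and> lipnorm f \<le> 1})"

definition delta_span :: "'a::metric_space \<Rightarrow> (('a \<Rightarrow> real) \<Rightarrow> real) set" where
  "delta_span x0 = {(\<lambda>f. \<Sum>p\<in>A. c p * delta x0 p f) | A c. finite A}"

text \<open>Lipschitz-free space: norm closure of delta_span in Lip_0(X)^*.\<close>
definition free_space :: "'a::metric_space \<Rightarrow> (('a \<Rightarrow> real) \<Rightarrow> real) set" where
  "free_space x0 = {\<phi>. (\<forall>f. f \<notin> Lip0 x0 \<longrightarrow> \<phi> f = 0) \<and>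
     (\<forall>\<epsilon>>0. \<exists>\<psi>\<in>delta_span x0. \<forall>f\<in>Lip0 x0. \<bar>\<phi> f - \<psi> f\<bar> \<le> \<epsilon> * lipnorm f)}"

definition interp_op :: "('i \<Rightarrow> 'a::metric_space) \<Rightarrow> ('i \<Rightarrow> 'a) \<Rightarrow> ('a \<Rightarrow> real) \<Rightarrow> ('i \<Rightarrow> real)" where
  "interp_op x y f = (\<lambda>i. (f (x i) - f (y i)) / dist (x i) (y i))"

definition synth_op :: "'a::metric_space \<Rightarrow> ('i \<Rightarrow> 'a) \<Rightarrow> ('i \<Rightarrow> 'a) \<Rightarrow> ('i \<Rightarrow> real) \<Rightarrow> (('a \<Rightarrow> real) \<Rightarrow> real)" where
  "synth_op x0 x y \<mu> = (\<lambda>f. \<Sum>\<^sub>\<infinity>i. \<mu> i * mol x0 (x i) (y i) f)"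

definition lip_interpolating :: "'a::metric_space \<Rightarrow> ('i \<Rightarrow> 'a) \<Rightarrow> ('i \<Rightarrow> 'a) \<Rightarrow> bool" where
  "lip_interpolating x0 x y \<longleftrightarrow> (\<forall>i. x i \<noteq> y i) \<and>
     (\<forall>\<alpha>\<in>ell_inf. \<exists>f\<in>Lip0 x0. interp_op x y f = \<alpha>)"

definition interp_const :: "'a::metric_space \<Rightarrow> ('i \<Rightarrow> 'a) \<Rightarrow> ('i \<Rightarrow> 'a) \<Rightarrow> real" where
  "interp_const x0 x y = Inf {K. 1 \<le> K \<and> (\<forall>\<alpha>\<in>ell_inf. linf_norm \<alpha> \<le> 1 \<longrightarrow>
       (\<exists>f\<in>Lip0 x0. lipnorm f \<le> K \<and> interp_op x y f = \<alpha>))}"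

definition beurling_set :: "'a::metric_space \<Rightarrow> ('i \<Rightarrow> 'a) \<Rightarrow> ('i \<Rightarrow> 'a) \<Rightarrow> real \<Rightarrow> ('i \<Rightarrow> 'a \<Rightarrow> real) \<Rightarrow> bool" where
  "beurling_set x0 x y M F \<longleftrightarrow> (\<forall>i. F i x0 = 0) \<and>
     (\<forall>i j. (F i (x j) - F i (y j)) / dist (x j) (y j) = (if i = j then 1 else 0)) \<and>
     (\<forall>p q. p \<noteq> q \<longrightarrow> (\<lambda>i. \<bar>F i p - F i q\<bar> / dist p q) summable_on UNIV \<and>
        (\<Sum>\<^sub>\<infinity>i. \<bar>F i p - F i q\<bar> / dist p q) \<le> M)"

definition linear_on :: "('b \<Rightarrow> real) set \<Rightarrow> (('b \<Rightarrow> real) \<Rightarrow> ('c \<Rightarrow> real)) \<Rightarrow> bool" where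
  "linear_on A L \<longleftrightarrow> (\<forall>a b. \<forall>u\<in>A. \<forall>v\<in>A. L (\<lambda>s. a * u s + b * v s) = (\<lambda>t. a * L u t + b * L v t))"

definition bounded_on :: "'b set \<Rightarrow> ('b \<Rightarrow> real) \<Rightarrow> ('c \<Rightarrow> real) \<Rightarrow> ('b \<Rightarrow> 'c) \<Rightarrow> bool" where
  "bounded_on A nA nB L \<longleftrightarrow> (\<exists>K. \<forall>u\<in>A. nB (L u) \<le> K * nA u)"

definition opnorm_on :: "'b set \<Rightarrow> ('b \<Rightarrow> real) \<Rightarrow> ('c \<Rightarrow> real) \<Rightarrow> ('b \<Rightarrow> 'c) \<Rightarrow> real" where
  "opnorm_on A nA nB L = Sup (insert 0 ((\<lambda>u. nB (L u) / nA u) ` A))"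

definition wstar_linf :: "('i \<Rightarrow> real) topology" where
  "wstar_linf = topology_generated_by
     {{\<alpha>\<in>ell_inf. (\<Sum>\<^sub>\<infinity>i. \<alpha> i * \<mu> i) \<in> U} | \<mu> U. \<mu> \<in> ell_1 \<and> open U}"

definition wstar_lip :: "'a::metric_space \<Rightarrow> ('a \<Rightarrow> real) topology" where
  "wstar_lip x0 = topology_generated_by
     {{f\<in>Lip0 x0. \<phi> f \<in> U} | \<phi> U. \<phi> \<in> free_space x0 \<and> open U}"

end

theory Submission
  imports Defs
begin

(* A Beurling set (F i) with constant N carries all the objects of the theorem at once:
   R \<alpha> = (\<Sum>i. \<alpha> i * F i), P \<phi> = (\<lambda>i. \<phi> (F i)) and f p = (\<lambda>i. F i p).  Conversely
   F i = R e_i, F i p = P \<delta>_p i and F i p = f p i recover a Beurling set from each of them, and in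
   both directions the Beurling bound \<Sum>i. |F i p - F i q| <= N * d(p,q) is the norm bound of the
   operator: for R it is tested on the signs of the increments, for P on the molecule m_{p,q}, whose
   norm is 1.  Extensions of norm <= N show M <= N, so everything built from a Beurling set with
   constant M has norm exactly M.  Weak*-continuity of R is the identity
   \<phi> (R \<alpha>) = (\<Sum>i. \<alpha> i * \<phi> (F i)), which holds for finite combinations of deltas and passes to
   their closure F(X) because the error is controlled by the Beurling bound. *)

section \<open>Lipschitz functions\<close>

lemma Lip0I:
  assumes "f x0 = 0" "\<And>p q. \<bar>f p - f q\<bar> \<le> K * dist p q"
  shows "f \<in> Lip0 x0"
  using assms unfolding Lip0_def by blast

lemma Lip0_base_point: "f \<in> Lip0 x0 \<Longrightarrow> f x0 = 0"
  unfolding Lip0_def by blast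

lemma bdd_above_Lipschitz_ratios:
  assumes "\<And>p q. N (sub (f p) (f q)) \<le> K * dist p q"
  shows "bdd_above (insert 0 {N (sub (f p) (f q)) / dist p q | p q. p \<noteq> q})"
proof -
  have "N (sub (f p) (f q)) / dist p q \<le> K" if "p \<noteq> q" for p q
    using assms[of p q] that by (simp add: divide_le_eq)
  then show ?thesis
    unfolding bdd_above_insert by (auto intro: bdd_aboveI[of _ K])
qed

lemma bdd_above_lipnorm_ratios:
  assumes "f \<in> Lip0 x0"
  shows "bdd_above (insert 0 {\<bar>f p - f q\<bar> / dist p q | p q. p \<noteq> q})"
proof -
  obtain K where "\<And>p q. \<bar>f p - f q\<bar> \<le> K * dist p q"
    using assms unfolding Lip0_def by blast
  then show ?thesis
    by (rule bdd_above_Lipschitz_ratios[where N = abs and sub = minus])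
qed

lemma lipnorm_nonneg: "f \<in> Lip0 x0 \<Longrightarrow> 0 \<le> lipnorm f"
  unfolding lipnorm_def by (rule cSup_upper[OF _ bdd_above_lipnorm_ratios]) auto

lemma abs_diff_le_lipnorm:
  assumes "f \<in> Lip0 x0"
  shows "\<bar>f p - f q\<bar> \<le> lipnorm f * dist p q"
proof (cases "p = q")
  case False
  have "\<bar>f p - f q\<bar> / dist p q \<le> lipnorm f"
    unfolding lipnorm_def by (rule cSup_upper[OF _ bdd_above_lipnorm_ratios[OF assms]]) (use False in auto)
  then show ?thesis using False by (simp add: divide_le_eq)
qed simp

lemma lipnorm_le:
  assumes "\<And>p q. p \<noteq> q \<Longrightarrow> \<bar>f p - f q\<bar> \<le> C * dist p q" "0 \<le> C"
  shows "lipnorm f \<le> C"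
  unfolding lipnorm_def
  by (rule cSup_least) (use assms in \<open>auto simp: divide_le_eq\<close>)

lemma Lip0_lincomb:
  assumes "f \<in> Lip0 x0" "g \<in> Lip0 x0"
  shows "(\<lambda>p. a * f p + b * g p) \<in> Lip0 x0"
proof (rule Lip0I)
  show "a * f x0 + b * g x0 = 0" using assms by (simp add: Lip0_base_point)
  fix p q
  have "\<bar>(a * f p + b * g p) - (a * f q + b * g q)\<bar> \<le> \<bar>a\<bar> * \<bar>f p - f q\<bar> + \<bar>b\<bar> * \<bar>g p - g q\<bar>"
    by (metis abs_mult abs_triangle_ineq add_diff_add right_diff_distrib)
  also have "\<dots> \<le> \<bar>a\<bar> * (lipnorm f * dist p q) + \<bar>b\<bar> * (lipnorm g * dist p q)"
    by (intro add_mono mult_left_mono abs_diff_le_lipnorm[OF assms(1)] abs_diff_le_lipnorm[OF assms(2)]) auto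
  also have "\<dots> = (\<bar>a\<bar> * lipnorm f + \<bar>b\<bar> * lipnorm g) * dist p q"
    by algebra
  finally show "\<bar>(a * f p + b * g p) - (a * f q + b * g q)\<bar> \<le> (\<bar>a\<bar> * lipnorm f + \<bar>b\<bar> * lipnorm g) * dist p q" .
qed

lemma Lip0_zero: "(\<lambda>p. 0) \<in> Lip0 x0"
  by (rule Lip0I[where K = 0]) auto

lemma Lip0_sum:
  assumes "finite G" "\<And>i. i \<in> G \<Longrightarrow> g i \<in> Lip0 x0"
  shows "(\<lambda>p. \<Sum>i\<in>G. c i * g i p) \<in> Lip0 x0"
  using assms
proof (induction G rule: finite_induct)
  case (insert k G)
  then have "(\<lambda>p. 1 * (\<Sum>i\<in>G. c i * g i p) + c k * g k p) \<in> Lip0 x0"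
    by (intro Lip0_lincomb) auto
  then show ?case using insert by (simp add: add.commute)
qed (simp add: Lip0_zero)

section \<open>Sequence spaces and operator norms\<close>

lemma bdd_above_linf_values: "\<alpha> \<in> ell_inf \<Longrightarrow> bdd_above (insert 0 (range (\<lambda>i. \<bar>\<alpha> i\<bar>)))"
  unfolding ell_inf_def bdd_above_insert by (auto intro: bdd_aboveI2)

lemma abs_le_linf_norm: "\<alpha> \<in> ell_inf \<Longrightarrow> \<bar>\<alpha> i\<bar> \<le> linf_norm \<alpha>"
  unfolding linf_norm_def by (rule cSup_upper[OF _ bdd_above_linf_values]) auto

lemma linf_norm_nonneg: "\<alpha> \<in> ell_inf \<Longrightarrow> 0 \<le> linf_norm \<alpha>"
  unfolding linf_norm_def by (rule cSup_upper[OF _ bdd_above_linf_values]) auto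

lemma linf_norm_le: "(\<And>i. \<bar>\<alpha> i\<bar> \<le> C) \<Longrightarrow> 0 \<le> C \<Longrightarrow> linf_norm \<alpha> \<le> C"
  unfolding linf_norm_def by (rule cSup_least) auto

lemma c_0_subset_ell_inf: "c_0 \<subseteq> ell_inf"
proof
  fix \<alpha> :: "'i \<Rightarrow> real"
  assume "\<alpha> \<in> c_0"
  define B where "B = {i. 1 \<le> \<bar>\<alpha> i\<bar>}"
  have "finite B"
    using \<open>\<alpha> \<in> c_0\<close> unfolding c_0_def B_def by auto
  have "\<bar>\<alpha> i\<bar> \<le> 1 + (\<Sum>j\<in>B. \<bar>\<alpha> j\<bar>)" for i
  proof (cases "i \<in> B")
    case True
    then show ?thesis
      using member_le_sum[of i B "\<lambda>j. \<bar>\<alpha> j\<bar>"] \<open>finite B\<close> by simp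
  next
    case False
    then have "\<bar>\<alpha> i\<bar> < 1"
      by (simp add: B_def)
    moreover have "0 \<le> (\<Sum>j\<in>B. \<bar>\<alpha> j\<bar>)"
      by (simp add: sum_nonneg)
    ultimately show ?thesis
      by linarith
  qed
  then show "\<alpha> \<in> ell_inf"
    unfolding ell_inf_def by blast
qed

lemma finite_support_in_c_0: "finite G \<Longrightarrow> (\<And>i. i \<notin> G \<Longrightarrow> \<alpha> i = 0) \<Longrightarrow> \<alpha> \<in> c_0"
proof -
  assume "finite G" and zero: "\<And>i. i \<notin> G \<Longrightarrow> \<alpha> i = 0"
  have "{i. \<epsilon> \<le> \<bar>\<alpha> i\<bar>} \<subseteq> G" if "\<epsilon> > 0" for \<epsilon> :: real
    using zero that by force
  then show ?thesis
    unfolding c_0_def using \<open>finite G\<close> finite_subset by blast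
qed

lemma summable_on_ell_inf_mult:
  assumes "\<alpha> \<in> ell_inf" "(\<lambda>i. \<bar>g i\<bar>) summable_on UNIV"
  shows "(\<lambda>i. \<bar>\<alpha> i * g i\<bar>) summable_on UNIV" "(\<lambda>i. \<alpha> i * g i) summable_on UNIV"
proof -
  show abs: "(\<lambda>i. \<bar>\<alpha> i * g i\<bar>) summable_on UNIV"
  proof (rule summable_on_comparison_test)
    show "(\<lambda>i. linf_norm \<alpha> * \<bar>g i\<bar>) summable_on UNIV"
      by (rule summable_on_cmult_right[OF assms(2)])
    show "\<bar>\<alpha> i * g i\<bar> \<le> linf_norm \<alpha> * \<bar>g i\<bar>" for i
      unfolding abs_mult by (rule mult_right_mono) (use abs_le_linf_norm[OF assms(1)] in auto)
  qed simp
  then show "(\<lambda>i. \<alpha> i * g i) summable_on UNIV"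
    by (subst summable_on_iff_abs_summable_on_real) simp
qed

lemma abs_infsum_ell_inf_mult_le:
  assumes "\<alpha> \<in> ell_inf" "(\<lambda>i. \<bar>g i\<bar>) summable_on UNIV"
  shows "\<bar>\<Sum>\<^sub>\<infinity>i. \<alpha> i * g i\<bar> \<le> linf_norm \<alpha> * (\<Sum>\<^sub>\<infinity>i. \<bar>g i\<bar>)"
proof -
  have "\<bar>\<Sum>\<^sub>\<infinity>i. \<alpha> i * g i\<bar> \<le> (\<Sum>\<^sub>\<infinity>i. \<bar>\<alpha> i * g i\<bar>)"
    using norm_infsum_bound[of "\<lambda>i. \<alpha> i * g i" UNIV] summable_on_ell_inf_mult(1)[OF assms] by simp
  also have "\<dots> \<le> (\<Sum>\<^sub>\<infinity>i. linf_norm \<alpha> * \<bar>g i\<bar>)"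
    by (rule infsum_mono[OF summable_on_ell_inf_mult(1)[OF assms] summable_on_cmult_right[OF assms(2)]])
       (auto simp: abs_mult intro: mult_right_mono abs_le_linf_norm[OF assms(1)])
  also have "\<dots> = linf_norm \<alpha> * (\<Sum>\<^sub>\<infinity>i. \<bar>g i\<bar>)"
    by (rule infsum_cmult_right[OF assms(2)])
  finally show ?thesis .
qed

lemma nonneg_summable_on_infsum_le:
  fixes f :: "'i \<Rightarrow> real"
  assumes "\<And>i. 0 \<le> f i" "\<And>G. finite G \<Longrightarrow> sum f G \<le> B"
  shows "f summable_on UNIV" "infsum f UNIV \<le> B"
proof -
  show summable: "f summable_on UNIV"
    by (rule nonneg_bdd_above_summable_on) (use assms in \<open>auto simp: bdd_above_def\<close>)
  show "infsum f UNIV \<le> B"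
    by (rule infsum_le_finite_sums[OF summable]) (use assms in auto)
qed

lemma infsum_diff:
  fixes f g :: "'i \<Rightarrow> 'b::{topological_ab_group_add, t2_space}"
  assumes "f summable_on A" "g summable_on A"
  shows "infsum (\<lambda>i. f i - g i) A = infsum f A - infsum g A"
  using infsum_add[OF assms(1) summable_on_uminus[THEN iffD2, OF assms(2)]]
  by (simp add: infsum_uminus)

lemma infsum_if_eq:
  fixes c :: "'i \<Rightarrow> 'b::{topological_comm_monoid_add, t2_space}"
  shows "(\<Sum>\<^sub>\<infinity>i. if i = j then c i else 0) = c j"
  using infsum_cong_neutral[of "{j}" UNIV "\<lambda>i. if i = j then c i else 0" "\<lambda>i. if i = j then c i else 0"]
  by simp

lemma infsum_finite_sum:
  fixes g :: "'p \<Rightarrow> 'i \<Rightarrow> 'b::{topological_comm_monoid_add, t2_space}"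
  assumes "finite A" "\<And>p. p \<in> A \<Longrightarrow> g p summable_on UNIV"
  shows "(\<Sum>\<^sub>\<infinity>i. \<Sum>p\<in>A. g p i) = (\<Sum>p\<in>A. \<Sum>\<^sub>\<infinity>i. g p i)"
proof -
  have "(\<lambda>i. \<Sum>p\<in>A. g p i) summable_on UNIV \<and> (\<Sum>\<^sub>\<infinity>i. \<Sum>p\<in>A. g p i) = (\<Sum>p\<in>A. \<Sum>\<^sub>\<infinity>i. g p i)"
    using assms
  proof (induction A rule: finite_induct)
    case (insert k A)
    then show ?case by (simp add: summable_on_add infsum_add)
  qed simp
  then show ?thesis ..
qed

lemma sum_abs_le_l1_norm: "\<mu> \<in> ell_1 \<Longrightarrow> finite G \<Longrightarrow> (\<Sum>i\<in>G. \<bar>\<mu> i\<bar>) \<le> l1_norm \<mu>"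
  unfolding ell_1_def l1_norm_def by (auto intro: finite_sum_le_infsum)

lemma ell_1_diff:
  assumes "\<mu> \<in> ell_1" "\<nu> \<in> ell_1"
  shows "(\<lambda>i. \<mu> i - \<nu> i) \<in> ell_1"
proof -
  have "(\<lambda>i. \<bar>\<mu> i\<bar> + \<bar>\<nu> i\<bar>) summable_on UNIV"
    using assms unfolding ell_1_def by (auto intro: summable_on_add)
  then have "(\<lambda>i. \<bar>\<mu> i - \<nu> i\<bar>) summable_on UNIV"
    by (rule summable_on_comparison_test) auto
  then show ?thesis
    unfolding ell_1_def by simp
qed

definition basis_seq :: "'i \<Rightarrow> 'i \<Rightarrow> real" where
  "basis_seq i = (\<lambda>j. if j = i then 1 else 0)"

lemma sum_basis_seq: "finite G \<Longrightarrow> (\<Sum>i\<in>G. c i * basis_seq i j) = (if j \<in> G then c j else 0)"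
  unfolding basis_seq_def by (simp add: if_distrib[of "(*) _"] sum.delta cong: if_cong)

lemma finite_basis_comb_in_c_0: "finite G \<Longrightarrow> (\<lambda>j. \<Sum>i\<in>G. c i * basis_seq i j) \<in> c_0"
  by (rule finite_support_in_c_0[of G]) (simp_all add: sum_basis_seq)

lemma basis_seq_in_c_0: "basis_seq i \<in> c_0"
  using finite_basis_comb_in_c_0[of "{i}" "\<lambda>_. 1"] by (simp add: basis_seq_def)

lemma basis_seq_in_ell_1: "basis_seq i \<in> ell_1"
proof -
  have "finite {j. \<bar>basis_seq i j\<bar> \<noteq> 0}"
    by (rule finite_subset[of _ "{i}"]) (auto simp: basis_seq_def)
  then show ?thesis
    unfolding ell_1_def by (simp add: finite_nonzero_values_imp_summable_on)
qed

lemma linear_onD: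
  "linear_on A L \<Longrightarrow> u \<in> A \<Longrightarrow> v \<in> A \<Longrightarrow> L (\<lambda>s. a * u s + b * v s) = (\<lambda>t. a * L u t + b * L v t)"
  unfolding linear_on_def by blast

lemma linear_on_subset: "linear_on A L \<Longrightarrow> B \<subseteq> A \<Longrightarrow> linear_on B L"
  unfolding linear_on_def by blast

lemma linear_on_zero: "linear_on A L \<Longrightarrow> u \<in> A \<Longrightarrow> L (\<lambda>s. 0) = (\<lambda>t. 0)"
  using linear_onD[of A L u u 0 0] by simp

lemma bdd_above_opnorm_ratios:
  assumes "bounded_on A nA nB L" "\<And>u. u \<in> A \<Longrightarrow> 0 \<le> nA u"
  shows "bdd_above (insert 0 ((\<lambda>u. nB (L u) / nA u) ` A))"
proof -
  obtain K where K: "\<And>u. u \<in> A \<Longrightarrow> nB (L u) \<le> K * nA u"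
    using assms(1) unfolding bounded_on_def by blast
  have "nB (L u) / nA u \<le> max K 0" if "u \<in> A" for u
  proof (cases "nA u = 0")
    case False
    then have "nB (L u) / nA u \<le> K"
      using K[OF that] assms(2)[OF that] by (simp add: divide_le_eq)
    then show ?thesis by simp
  qed simp
  then show ?thesis
    unfolding bdd_above_insert by (rule bdd_aboveI2[where M = "max K 0"])
qed

lemma opnorm_nonneg:
  assumes "bounded_on A nA nB L" "\<And>u. u \<in> A \<Longrightarrow> 0 \<le> nA u"
  shows "0 \<le> opnorm_on A nA nB L"
  unfolding opnorm_on_def by (rule cSup_upper[OF _ bdd_above_opnorm_ratios[OF assms]]) auto

lemma le_opnorm:
  assumes "bounded_on A nA nB L" "\<And>u. u \<in> A \<Longrightarrow> 0 \<le> nA u" "u \<in> A"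
  shows "nB (L u) \<le> opnorm_on A nA nB L * nA u"
proof (cases "nA u = 0")
  case True
  then show ?thesis
    using assms unfolding bounded_on_def by force
next
  case False
  have "nB (L u) / nA u \<le> opnorm_on A nA nB L"
    unfolding opnorm_on_def by (rule cSup_upper[OF _ bdd_above_opnorm_ratios[OF assms(1,2)]]) (use assms in auto)
  then show ?thesis using False assms(2)[OF assms(3)] by (simp add: divide_le_eq)
qed

lemma opnorm_le:
  assumes "\<And>u. u \<in> A \<Longrightarrow> nB (L u) \<le> C * nA u" "0 \<le> C" "\<And>u. u \<in> A \<Longrightarrow> 0 \<le> nA u"
  shows "opnorm_on A nA nB L \<le> C"
  unfolding opnorm_on_def
proof (rule cSup_least)
  fix z
  assume "z \<in> insert 0 ((\<lambda>u. nB (L u) / nA u) ` A)"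
  then consider "z = 0" | u where "u \<in> A" "z = nB (L u) / nA u"
    by blast
  then show "z \<le> C"
  proof cases
    case 2
    then show ?thesis
      using assms(1)[of u] assms(2) assms(3)[of u] by (cases "nA u = 0") (auto simp: divide_le_eq)
  qed (use assms in simp)
qed simp

section \<open>The Lipschitz-free space\<close>

lemma delta_Lip0: "f \<in> Lip0 x0 \<Longrightarrow> delta x0 p f = f p"
  unfolding delta_def by simp

lemma delta_base_point: "delta x0 x0 = (\<lambda>f. 0)"
  unfolding delta_def Lip0_def by auto

lemma mol_eq_delta_lincomb:
  "mol x0 p q = (\<lambda>f. (1 / dist p q) * delta x0 p f + (- 1 / dist p q) * delta x0 q f)"
  unfolding mol_def by (auto simp: fun_eq_iff diff_divide_distrib)

lemma delta_span_linear:
  assumes "\<psi> \<in> delta_span x0" "g \<in> Lip0 x0" "h \<in> Lip0 x0"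
  shows "\<psi> (\<lambda>p. a * g p + b * h p) = a * \<psi> g + b * \<psi> h"
proof -
  obtain A c where "\<psi> = (\<lambda>f. \<Sum>p\<in>A. c p * delta x0 p f)"
    using assms(1) unfolding delta_span_def by blast
  then show ?thesis
    using assms(2,3) Lip0_lincomb[OF assms(2,3)]
    by (simp add: delta_Lip0 distrib_left sum.distrib sum_distrib_left mult.left_commute)
qed

lemma delta_span_subset_free_space: "delta_span x0 \<subseteq> free_space x0"
proof
  fix \<psi>
  assume \<psi>: "\<psi> \<in> delta_span x0"
  then have "\<psi> f = 0" if "f \<notin> Lip0 x0" for f
    using that unfolding delta_span_def delta_def by auto
  moreover have "\<bar>\<psi> f - \<psi> f\<bar> \<le> \<epsilon> * lipnorm f" if "\<epsilon> > 0" "f \<in> Lip0 x0" for \<epsilon> f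
    using that lipnorm_nonneg[of f x0] by simp
  ultimately show "\<psi> \<in> free_space x0"
    unfolding free_space_def using \<psi> by blast
qed

lemma delta_in_free_space: "delta x0 p \<in> free_space x0"
proof -
  have "delta x0 p \<in> delta_span x0"
    unfolding delta_span_def by (intro CollectI exI[of _ "{p}"] exI[of _ "\<lambda>_. 1"]) auto
  then show ?thesis
    using delta_span_subset_free_space by blast
qed

lemma mol_in_free_space: "mol x0 p q \<in> free_space x0"
proof -
  have "mol x0 p q \<in> delta_span x0"
    unfolding delta_span_def mol_eq_delta_lincomb
    by (intro CollectI exI[of _ "{p, q}"] exI[of _ "\<lambda>z. if z = p then 1 / dist p q else - 1 / dist p q"])
       (cases "p = q"; simp add: fun_eq_iff)
  then show ?thesis
    using delta_span_subset_free_space by blast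
qed

lemma eq_if_abs_diff_le_epsilon_mult:
  fixes a b C :: real
  assumes "\<And>\<epsilon>. \<epsilon> > 0 \<Longrightarrow> \<bar>a - b\<bar> \<le> \<epsilon> * C"
  shows "a = b"
proof (rule ccontr)
  assume "a \<noteq> b"
  then have "\<bar>a - b\<bar> > 0" by simp
  with assms[of 1] have "C > 0" by simp
  have "\<bar>a - b\<bar> / (2 * C) > 0"
    using \<open>\<bar>a - b\<bar> > 0\<close> \<open>C > 0\<close> by simp
  then have "\<bar>a - b\<bar> \<le> \<bar>a - b\<bar> / (2 * C) * C"
    by (rule assms)
  also have "\<dots> = \<bar>a - b\<bar> / 2"
    using \<open>C > 0\<close> by simp
  finally show False
    using \<open>\<bar>a - b\<bar> > 0\<close> by simp
qed

lemma free_space_approx: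
  assumes "\<phi> \<in> free_space x0" "\<epsilon> > 0"
  obtains \<psi> where "\<psi> \<in> delta_span x0" "\<And>f. f \<in> Lip0 x0 \<Longrightarrow> \<bar>\<phi> f - \<psi> f\<bar> \<le> \<epsilon> * lipnorm f"
  using assms unfolding free_space_def by blast

lemma free_space_linear:
  assumes "\<phi> \<in> free_space x0" "g \<in> Lip0 x0" "h \<in> Lip0 x0"
  shows "\<phi> (\<lambda>p. a * g p + b * h p) = a * \<phi> g + b * \<phi> h"
proof (rule eq_if_abs_diff_le_epsilon_mult)
  define k where "k = (\<lambda>p. a * g p + b * h p)"
  have k: "k \<in> Lip0 x0"
    unfolding k_def by (rule Lip0_lincomb[OF assms(2,3)])
  fix \<epsilon> :: real
  assume "\<epsilon> > 0"
  then obtain \<psi> where \<psi>: "\<psi> \<in> delta_span x0" "\<And>f. f \<in> Lip0 x0 \<Longrightarrow> \<bar>\<phi> f - \<psi> f\<bar> \<le> \<epsilon> * lipnorm f"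
    using free_space_approx[OF assms(1)] by blast
  have "\<psi> k = a * \<psi> g + b * \<psi> h"
    unfolding k_def by (rule delta_span_linear[OF \<psi>(1) assms(2,3)])
  then have "\<bar>\<phi> k - (a * \<phi> g + b * \<phi> h)\<bar> \<le> \<bar>\<phi> k - \<psi> k\<bar> + \<bar>a\<bar> * \<bar>\<phi> g - \<psi> g\<bar> + \<bar>b\<bar> * \<bar>\<phi> h - \<psi> h\<bar>"
    by (simp add: abs_mult[symmetric] algebra_simps)
  also have "\<dots> \<le> \<epsilon> * lipnorm k + \<bar>a\<bar> * (\<epsilon> * lipnorm g) + \<bar>b\<bar> * (\<epsilon> * lipnorm h)"
    by (intro add_mono mult_left_mono \<psi>(2) k assms(2,3)) auto
  also have "\<dots> = \<epsilon> * (lipnorm k + \<bar>a\<bar> * lipnorm g + \<bar>b\<bar> * lipnorm h)"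
    by (simp add: algebra_simps)
  finally show "\<bar>\<phi> (\<lambda>p. a * g p + b * h p) - (a * \<phi> g + b * \<phi> h)\<bar> \<le> \<epsilon> * (lipnorm k + \<bar>a\<bar> * lipnorm g + \<bar>b\<bar> * lipnorm h)"
    unfolding k_def .
qed

lemma free_space_zero: "\<phi> \<in> free_space x0 \<Longrightarrow> \<phi> (\<lambda>p. 0) = 0"
  using free_space_linear[OF _ Lip0_zero Lip0_zero, of \<phi> x0 0 0] by simp

lemma free_space_sum:
  assumes "\<phi> \<in> free_space x0" "finite G" "\<And>i. i \<in> G \<Longrightarrow> g i \<in> Lip0 x0"
  shows "\<phi> (\<lambda>p. \<Sum>i\<in>G. c i * g i p) = (\<Sum>i\<in>G. c i * \<phi> (g i))"
  using assms(2,3)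
proof (induction G rule: finite_induct)
  case (insert k G)
  have "\<phi> (\<lambda>p. 1 * (\<Sum>i\<in>G. c i * g i p) + c k * g k p) = 1 * \<phi> (\<lambda>p. \<Sum>i\<in>G. c i * g i p) + c k * \<phi> (g k)"
    using insert by (intro free_space_linear[OF assms(1)] Lip0_sum) auto
  then show ?case
    using insert by (simp add: add.commute)
qed (simp add: free_space_zero[OF assms(1)])

lemma bdd_above_dual_norm_values:
  assumes "\<phi> \<in> free_space x0"
  shows "bdd_above (insert 0 {\<bar>\<phi> f\<bar> | f. f \<in> Lip0 x0 \<and> lipnorm f \<le> 1})"
proof -
  obtain \<psi> where \<psi>: "\<psi> \<in> delta_span x0" "\<And>f. f \<in> Lip0 x0 \<Longrightarrow> \<bar>\<phi> f - \<psi> f\<bar> \<le> 1 * lipnorm f"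
    using free_space_approx[OF assms, of 1] by auto
  obtain A c where \<psi>_eq: "\<psi> = (\<lambda>f. \<Sum>p\<in>A. c p * delta x0 p f)"
    using \<psi>(1) unfolding delta_span_def by blast
  have "\<bar>\<phi> f\<bar> \<le> (\<Sum>p\<in>A. \<bar>c p\<bar> * dist p x0) + 1" if f: "f \<in> Lip0 x0" "lipnorm f \<le> 1" for f
  proof -
    have "\<bar>c p * f p\<bar> \<le> \<bar>c p\<bar> * dist p x0" for p
    proof -
      have "\<bar>f p\<bar> \<le> lipnorm f * dist p x0"
        using abs_diff_le_lipnorm[OF f(1), of p x0] Lip0_base_point[OF f(1)] by simp
      also have "\<dots> \<le> dist p x0"
        using mult_right_mono[OF f(2) zero_le_dist[of p x0]] by simp
      finally show ?thesis
        by (simp add: abs_mult mult_left_mono)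
    qed
    then have "\<bar>\<psi> f\<bar> \<le> (\<Sum>p\<in>A. \<bar>c p\<bar> * dist p x0)"
      unfolding \<psi>_eq using f(1) by (simp add: delta_Lip0 sum_abs order_trans[OF sum_abs sum_mono])
    moreover have "\<bar>\<phi> f - \<psi> f\<bar> \<le> 1"
      using \<psi>(2)[OF f(1)] f(2) by simp
    ultimately show ?thesis
      by linarith
  qed
  then show ?thesis
    unfolding bdd_above_insert by (intro bdd_aboveI[of _ "(\<Sum>p\<in>A. \<bar>c p\<bar> * dist p x0) + 1"]) auto
qed

lemma dual_norm_nonneg: "\<phi> \<in> free_space x0 \<Longrightarrow> 0 \<le> dual_norm x0 \<phi>"
  unfolding dual_norm_def by (rule cSup_upper[OF _ bdd_above_dual_norm_values]) auto

lemma abs_le_dual_norm: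
  "\<phi> \<in> free_space x0 \<Longrightarrow> f \<in> Lip0 x0 \<Longrightarrow> lipnorm f \<le> 1 \<Longrightarrow> \<bar>\<phi> f\<bar> \<le> dual_norm x0 \<phi>"
  unfolding dual_norm_def by (rule cSup_upper[OF _ bdd_above_dual_norm_values]) auto

lemma abs_le_dual_norm_mult_lipnorm:
  assumes "\<phi> \<in> free_space x0" "g \<in> Lip0 x0"
  shows "\<bar>\<phi> g\<bar> \<le> dual_norm x0 \<phi> * lipnorm g"
proof (cases "lipnorm g = 0")
  case True
  have "g = (\<lambda>p. 0)"
    using abs_diff_le_lipnorm[OF assms(2), of _ x0] True Lip0_base_point[OF assms(2)] by fastforce
  then show ?thesis
    using free_space_zero[OF assms(1)] True by simp
next
  case False
  define L where "L = lipnorm g"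
  have "L > 0"
    using False lipnorm_nonneg[OF assms(2)] unfolding L_def by simp
  define h where "h = (\<lambda>p. g p / L)"
  have h: "h \<in> Lip0 x0"
    using Lip0_lincomb[OF assms(2,2), of "1 / L" 0] by (simp add: h_def)
  have "lipnorm h \<le> 1"
  proof (rule lipnorm_le)
    fix p q
    show "\<bar>h p - h q\<bar> \<le> 1 * dist p q"
      using abs_diff_le_lipnorm[OF assms(2), of p q] \<open>L > 0\<close>
      by (simp add: h_def L_def field_simps abs_mult[symmetric] right_diff_distrib[symmetric])
  qed simp
  then have "\<bar>\<phi> h\<bar> \<le> dual_norm x0 \<phi>"
    by (rule abs_le_dual_norm[OF assms(1) h])
  moreover have "\<phi> h = \<phi> g / L"
    using free_space_linear[OF assms(1,2,2), of "1 / L" 0] by (simp add: h_def)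
  ultimately show ?thesis
    using \<open>L > 0\<close> unfolding L_def by (simp add: abs_div divide_le_eq mult.commute)
qed

lemma dual_norm_mol:
  assumes "p \<noteq> q"
  shows "dual_norm x0 (mol x0 p q) = 1"
proof (rule antisym)
  have "\<bar>f p - f q\<bar> / dist p q \<le> 1" if "f \<in> Lip0 x0" "lipnorm f \<le> 1" for f
  proof -
    have "\<bar>f p - f q\<bar> \<le> lipnorm f * dist p q"
      by (rule abs_diff_le_lipnorm[OF that(1)])
    also have "\<dots> \<le> 1 * dist p q"
      by (rule mult_right_mono[OF that(2)]) simp
    finally show ?thesis
      using assms by (simp add: divide_le_eq)
  qed
  then show "dual_norm x0 (mol x0 p q) \<le> 1"
    unfolding dual_norm_def mol_def by (intro cSup_least) (auto simp: delta_Lip0 abs_div)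
next
  define g where "g = (\<lambda>z. dist z p - dist x0 p)"
  have g_Lip: "\<bar>g a - g b\<bar> \<le> 1 * dist a b" for a b
    unfolding g_def using abs_dist_diff_le[of a p b] by (simp add: dist_commute)
  have g: "g \<in> Lip0 x0"
    by (rule Lip0I[OF _ g_Lip]) (simp add: g_def)
  have "lipnorm g \<le> 1"
    by (rule lipnorm_le) (use g_Lip in auto)
  then have "\<bar>mol x0 p q g\<bar> \<le> dual_norm x0 (mol x0 p q)"
    by (rule abs_le_dual_norm[OF mol_in_free_space g])
  moreover have "mol x0 p q g = -1"
    using g assms unfolding mol_def g_def by (simp add: delta_Lip0 dist_commute)
  ultimately show "1 \<le> dual_norm x0 (mol x0 p q)"
    by simp
qed

lemma topspace_wstar_linf: "topspace wstar_linf = ell_inf"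
proof -
  have "(\<lambda>i. 0) \<in> (ell_1 :: ('i \<Rightarrow> real) set)"
    unfolding ell_1_def by simp
  then have "ell_inf \<in> {{\<alpha>\<in>ell_inf. (\<Sum>\<^sub>\<infinity>i. \<alpha> i * \<mu> i) \<in> U} | \<mu> U. \<mu> \<in> ell_1 \<and> open U}"
    by (intro CollectI exI[of _ "\<lambda>i::'i. 0::real"] exI[of _ UNIV]) auto
  then show ?thesis
    unfolding wstar_linf_def topology_generated_by_topspace by blast
qed

lemma topspace_wstar_lip: "topspace (wstar_lip x0) = Lip0 x0"
proof -
  have "Lip0 x0 \<in> {{f\<in>Lip0 x0. \<phi> f \<in> U} | \<phi> U. \<phi> \<in> free_space x0 \<and> open U}"
    by (intro CollectI exI[of _ "delta x0 x0"] exI[of _ UNIV]) (auto simp: delta_in_free_space)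
  then show ?thesis
    unfolding wstar_lip_def topology_generated_by_topspace by blast
qed

section \<open>Operators built from a Beurling set\<close>

locale beurling =
  fixes x0 :: "'a::metric_space" and x y :: "'i \<Rightarrow> 'a" and N :: real and F :: "'i \<Rightarrow> 'a \<Rightarrow> real"
  assumes beurling: "beurling_set x0 x y N F"
begin

lemma F_base_point: "F i x0 = 0"
  using beurling unfolding beurling_set_def by blast

lemma F_interpolates: "(F i (x j) - F i (y j)) / dist (x j) (y j) = (if i = j then 1 else 0)"
  using beurling unfolding beurling_set_def by blast

lemma points_distinct: "x j \<noteq> y j"
  using F_interpolates[of j j] by auto

lemma summable_abs_diff_ratio: "p \<noteq> q \<Longrightarrow> (\<lambda>i. \<bar>F i p - F i q\<bar> / dist p q) summable_on UNIV"
  and infsum_abs_diff_ratio_le: "p \<noteq> q \<Longrightarrow> (\<Sum>\<^sub>\<infinity>i. \<bar>F i p - F i q\<bar> / dist p q) \<le> N"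
  using beurling unfolding beurling_set_def by blast+

lemma summable_abs_diff: "(\<lambda>i. \<bar>F i p - F i q\<bar>) summable_on UNIV"
proof (cases "p = q")
  case False
  then show ?thesis
    using summable_on_cmult_right[OF summable_abs_diff_ratio[OF False], of "dist p q"] by simp
qed simp

lemma infsum_abs_diff_le: "(\<Sum>\<^sub>\<infinity>i. \<bar>F i p - F i q\<bar>) \<le> N * dist p q"
proof (cases "p = q")
  case False
  have "(\<Sum>\<^sub>\<infinity>i. \<bar>F i p - F i q\<bar>) = dist p q * (\<Sum>\<^sub>\<infinity>i. \<bar>F i p - F i q\<bar> / dist p q)"
    using infsum_cmult_right[OF summable_abs_diff_ratio[OF False], of "dist p q"] False by simp
  also have "\<dots> \<le> dist p q * N"
    by (rule mult_left_mono[OF infsum_abs_diff_ratio_le[OF False]]) simp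
  finally show ?thesis
    by (simp add: mult.commute)
qed simp

lemma sum_abs_diff_le:
  assumes "finite G"
  shows "(\<Sum>i\<in>G. \<bar>F i p - F i q\<bar>) \<le> N * dist p q"
proof -
  have "(\<Sum>i\<in>G. \<bar>F i p - F i q\<bar>) \<le> (\<Sum>\<^sub>\<infinity>i. \<bar>F i p - F i q\<bar>)"
    by (rule finite_sum_le_infsum[OF summable_abs_diff assms]) auto
  also have "\<dots> \<le> N * dist p q"
    by (rule infsum_abs_diff_le)
  finally show ?thesis .
qed

lemma abs_diff_le: "\<bar>F i p - F i q\<bar> \<le> N * dist p q"
  using sum_abs_diff_le[of "{i}" p q] by simp

lemma one_le_constant: "1 \<le> N"
proof -
  fix j
  have "1 = \<bar>(F j (x j) - F j (y j)) / dist (x j) (y j)\<bar>"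
    unfolding F_interpolates by simp
  also have "\<dots> = (\<Sum>i\<in>{j}. \<bar>F i (x j) - F i (y j)\<bar> / dist (x j) (y j))"
    by (simp add: abs_div)
  also have "\<dots> \<le> (\<Sum>\<^sub>\<infinity>i. \<bar>F i (x j) - F i (y j)\<bar> / dist (x j) (y j))"
    by (rule finite_sum_le_infsum[OF summable_abs_diff_ratio[OF points_distinct]]) auto
  also have "\<dots> \<le> N"
    by (rule infsum_abs_diff_ratio_le[OF points_distinct])
  finally show ?thesis .
qed

lemma F_Lip0: "F i \<in> Lip0 x0"
  by (rule Lip0I[OF F_base_point abs_diff_le])

lemma summable_abs_F: "(\<lambda>i. \<bar>F i p\<bar>) summable_on UNIV"
  using summable_abs_diff[of p x0] by (simp add: F_base_point)

lemma lipnorm_sum_le: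
  assumes "finite G" "\<And>i. \<bar>c i\<bar> \<le> 1"
  shows "lipnorm (\<lambda>p. \<Sum>i\<in>G. c i * F i p) \<le> N"
proof (rule lipnorm_le)
  fix p q :: 'a
  have "\<bar>(\<Sum>i\<in>G. c i * F i p) - (\<Sum>i\<in>G. c i * F i q)\<bar> = \<bar>\<Sum>i\<in>G. c i * (F i p - F i q)\<bar>"
    by (simp add: sum_subtractf right_diff_distrib)
  also have "\<dots> \<le> (\<Sum>i\<in>G. \<bar>c i\<bar> * \<bar>F i p - F i q\<bar>)"
    using sum_abs[of "\<lambda>i. c i * (F i p - F i q)" G] by (simp add: abs_mult)
  also have "\<dots> \<le> (\<Sum>i\<in>G. \<bar>F i p - F i q\<bar>)"
    by (rule sum_mono) (use assms(2) in \<open>auto intro: mult_left_le_one_le\<close>)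
  also have "\<dots> \<le> N * dist p q"
    by (rule sum_abs_diff_le[OF assms(1)])
  finally show "\<bar>(\<Sum>i\<in>G. c i * F i p) - (\<Sum>i\<in>G. c i * F i q)\<bar> \<le> N * dist p q" .
qed (use one_le_constant in simp)

lemma summable_abs_functional_F:
  fixes L :: "('a \<Rightarrow> real) \<Rightarrow> real"
  assumes linear: "\<And>G c. finite G \<Longrightarrow> L (\<lambda>p. \<Sum>i\<in>G. c i * F i p) = (\<Sum>i\<in>G. c i * L (F i))"
    and bounded: "\<And>g. g \<in> Lip0 x0 \<Longrightarrow> \<bar>L g\<bar> \<le> C * lipnorm g" and "0 \<le> C"
  shows "(\<lambda>i. \<bar>L (F i)\<bar>) summable_on UNIV" "(\<Sum>\<^sub>\<infinity>i. \<bar>L (F i)\<bar>) \<le> C * N"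
proof -
  have "(\<Sum>i\<in>G. \<bar>L (F i)\<bar>) \<le> C * N" if "finite G" for G
  proof -
    define s where "s i = sgn (L (F i))" for i
    have "(\<Sum>i\<in>G. \<bar>L (F i)\<bar>) = L (\<lambda>p. \<Sum>i\<in>G. s i * F i p)"
      unfolding linear[OF that] s_def by (simp add: abs_sgn mult.commute)
    also have "\<dots> \<le> C * lipnorm (\<lambda>p. \<Sum>i\<in>G. s i * F i p)"
      by (rule abs_le_D1[OF bounded[OF Lip0_sum[where g = F, OF that F_Lip0]]])
    also have "\<dots> \<le> C * N"
      by (rule mult_left_mono[OF lipnorm_sum_le[OF that] \<open>0 \<le> C\<close>]) (simp add: s_def abs_sgn_eq)
    finally show ?thesis .
  qed
  then show "(\<lambda>i. \<bar>L (F i)\<bar>) summable_on UNIV" "(\<Sum>\<^sub>\<infinity>i. \<bar>L (F i)\<bar>) \<le> C * N"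
    using nonneg_summable_on_infsum_le[of "\<lambda>i. \<bar>L (F i)\<bar>" "C * N"] by auto
qed

definition extension :: "('i \<Rightarrow> real) \<Rightarrow> 'a \<Rightarrow> real" where
  "extension \<alpha> = (\<lambda>p. \<Sum>\<^sub>\<infinity>i. \<alpha> i * F i p)"

lemma extension_diff:
  assumes "\<alpha> \<in> ell_inf"
  shows "extension \<alpha> p - extension \<alpha> q = (\<Sum>\<^sub>\<infinity>i. \<alpha> i * (F i p - F i q))"
  unfolding extension_def right_diff_distrib
  by (rule infsum_diff[symmetric]) (intro summable_on_ell_inf_mult(2)[OF assms summable_abs_F])+

lemma abs_extension_diff_le:
  assumes "\<alpha> \<in> ell_inf"
  shows "\<bar>extension \<alpha> p - extension \<alpha> q\<bar> \<le> (linf_norm \<alpha> * N) * dist p q"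
proof -
  have "\<bar>extension \<alpha> p - extension \<alpha> q\<bar> \<le> linf_norm \<alpha> * (\<Sum>\<^sub>\<infinity>i. \<bar>F i p - F i q\<bar>)"
    unfolding extension_diff[OF assms] by (rule abs_infsum_ell_inf_mult_le[OF assms summable_abs_diff])
  also have "\<dots> \<le> linf_norm \<alpha> * (N * dist p q)"
    by (rule mult_left_mono[OF infsum_abs_diff_le linf_norm_nonneg[OF assms]])
  finally show ?thesis
    by (simp add: mult.assoc)
qed

lemma extension_Lip0: "\<alpha> \<in> ell_inf \<Longrightarrow> extension \<alpha> \<in> Lip0 x0"
  by (rule Lip0I[OF _ abs_extension_diff_le]) (simp_all add: extension_def F_base_point)

lemma lipnorm_extension_le:
  assumes "\<alpha> \<in> ell_inf"
  shows "lipnorm (extension \<alpha>) \<le> N * linf_norm \<alpha>"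
proof (rule lipnorm_le)
  show "\<bar>extension \<alpha> p - extension \<alpha> q\<bar> \<le> N * linf_norm \<alpha> * dist p q" for p q
    using abs_extension_diff_le[OF assms] by (simp add: mult.commute)
  show "0 \<le> N * linf_norm \<alpha>"
    using one_le_constant linf_norm_nonneg[OF assms] by simp
qed

lemma interp_op_extension:
  assumes "\<alpha> \<in> ell_inf"
  shows "interp_op x y (extension \<alpha>) = \<alpha>"
proof
  fix j
  have term_eq: "\<alpha> i * (F i (x j) - F i (y j)) * (1 / dist (x j) (y j)) = (if i = j then \<alpha> i else 0)" for i
  proof -
    have "\<alpha> i * (F i (x j) - F i (y j)) * (1 / dist (x j) (y j))
        = \<alpha> i * ((F i (x j) - F i (y j)) / dist (x j) (y j))"
      by simp
    then show ?thesis
      unfolding F_interpolates by simp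
  qed
  have "interp_op x y (extension \<alpha>) j = (\<Sum>\<^sub>\<infinity>i. \<alpha> i * (F i (x j) - F i (y j))) * (1 / dist (x j) (y j))"
    unfolding interp_op_def extension_diff[OF assms] by simp
  also have "\<dots> = (\<Sum>\<^sub>\<infinity>i. \<alpha> i * (F i (x j) - F i (y j)) * (1 / dist (x j) (y j)))"
    by (rule infsum_cmult_left[symmetric]) (rule summable_on_ell_inf_mult(2)[OF assms summable_abs_diff])
  also have "\<dots> = \<alpha> j"
    unfolding term_eq by (rule infsum_if_eq)
  finally show "interp_op x y (extension \<alpha>) j = \<alpha> j" .
qed

lemma linear_on_extension: "linear_on ell_inf extension"
  unfolding linear_on_def
proof (intro allI ballI ext)
  fix a b :: real and u v :: "'i \<Rightarrow> real" and p :: 'a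
  assume "u \<in> ell_inf" "v \<in> ell_inf"
  then have "(\<lambda>i. u i * F i p) summable_on UNIV" "(\<lambda>i. v i * F i p) summable_on UNIV"
    using summable_on_ell_inf_mult(2)[OF _ summable_abs_F] by blast+
  then show "extension (\<lambda>s. a * u s + b * v s) p = a * extension u p + b * extension v p"
    unfolding extension_def
    by (simp add: distrib_right mult.assoc infsum_add summable_on_cmult_right infsum_cmult_right)
qed

lemma interp_const_le: "interp_const x0 x y \<le> N"
  unfolding interp_const_def
proof (rule cInf_lower)
  show "N \<in> {K. 1 \<le> K \<and> (\<forall>\<alpha>\<in>ell_inf. linf_norm \<alpha> \<le> 1 \<longrightarrow>
      (\<exists>f\<in>Lip0 x0. lipnorm f \<le> K \<and> interp_op x y f = \<alpha>))}"
  proof (intro CollectI conjI one_le_constant ballI impI)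
    fix \<alpha> :: "'i \<Rightarrow> real"
    assume "\<alpha> \<in> ell_inf" "linf_norm \<alpha> \<le> 1"
    have "lipnorm (extension \<alpha>) \<le> N * linf_norm \<alpha>"
      by (rule lipnorm_extension_le[OF \<open>\<alpha> \<in> ell_inf\<close>])
    also have "\<dots> \<le> N * 1"
      by (rule mult_left_mono[OF \<open>linf_norm \<alpha> \<le> 1\<close>]) (use one_le_constant in simp)
    finally have "lipnorm (extension \<alpha>) \<le> N"
      by simp
    then show "\<exists>f\<in>Lip0 x0. lipnorm f \<le> N \<and> interp_op x y f = \<alpha>"
      using extension_Lip0 interp_op_extension \<open>\<alpha> \<in> ell_inf\<close> by blast
  qed
qed (auto intro: bdd_belowI[of _ 1])

lemma extension_right_inverse:
  assumes "A \<subseteq> ell_inf"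
  shows "linear_on A extension" "extension ` A \<subseteq> Lip0 x0" "bounded_on A linf_norm lipnorm extension"
    "opnorm_on A linf_norm lipnorm extension \<le> N" "\<forall>\<alpha>\<in>A. interp_op x y (extension \<alpha>) = \<alpha>"
proof -
  have norm_le: "lipnorm (extension \<alpha>) \<le> N * linf_norm \<alpha>" if "\<alpha> \<in> A" for \<alpha>
    using lipnorm_extension_le assms that by blast
  then show "bounded_on A linf_norm lipnorm extension"
    unfolding bounded_on_def by blast
  show "opnorm_on A linf_norm lipnorm extension \<le> N"
    by (rule opnorm_le[where nB = lipnorm and L = extension, OF norm_le]) (use one_le_constant linf_norm_nonneg assms in auto)
  show "linear_on A extension"
    by (rule linear_on_subset[OF linear_on_extension assms])
  show "extension ` A \<subseteq> Lip0 x0" "\<forall>\<alpha>\<in>A. interp_op x y (extension \<alpha>) = \<alpha>"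
    using assms extension_Lip0 interp_op_extension by auto
qed

definition coefficients :: "(('a \<Rightarrow> real) \<Rightarrow> real) \<Rightarrow> 'i \<Rightarrow> real" where
  "coefficients \<phi> = (\<lambda>i. \<phi> (F i))"

lemma summable_abs_free_space_F:
  assumes "\<phi> \<in> free_space x0"
  shows "(\<lambda>i. \<bar>\<phi> (F i)\<bar>) summable_on UNIV" "(\<Sum>\<^sub>\<infinity>i. \<bar>\<phi> (F i)\<bar>) \<le> dual_norm x0 \<phi> * N"
  using summable_abs_functional_F[OF free_space_sum[OF assms] abs_le_dual_norm_mult_lipnorm[OF assms]
      dual_norm_nonneg[OF assms]] F_Lip0
  by auto

lemma coefficients_left_inverse:
  "linear_on (free_space x0) coefficients" "coefficients ` free_space x0 \<subseteq> ell_1"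
  "bounded_on (free_space x0) (dual_norm x0) l1_norm coefficients"
  "opnorm_on (free_space x0) (dual_norm x0) l1_norm coefficients \<le> N"
  "\<forall>\<mu>\<in>ell_1. coefficients (synth_op x0 x y \<mu>) = \<mu>"
proof -
  show "linear_on (free_space x0) coefficients"
    unfolding linear_on_def coefficients_def by simp
  show "coefficients ` free_space x0 \<subseteq> ell_1"
    unfolding coefficients_def ell_1_def using summable_abs_free_space_F(1) by blast
  have norm_le: "l1_norm (coefficients \<phi>) \<le> N * dual_norm x0 \<phi>" if "\<phi> \<in> free_space x0" for \<phi>
    using summable_abs_free_space_F(2)[OF that] unfolding l1_norm_def coefficients_def by (simp add: mult.commute)
  then show "bounded_on (free_space x0) (dual_norm x0) l1_norm coefficients"
    unfolding bounded_on_def by blast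
  show "opnorm_on (free_space x0) (dual_norm x0) l1_norm coefficients \<le> N"
    by (rule opnorm_le) (use norm_le one_le_constant dual_norm_nonneg in auto)
  show "\<forall>\<mu>\<in>ell_1. coefficients (synth_op x0 x y \<mu>) = \<mu>"
  proof (intro ballI ext)
    fix \<mu> :: "'i \<Rightarrow> real" and i
    have "\<mu> j * mol x0 (x j) (y j) (F i) = (if j = i then \<mu> j else 0)" for j
      unfolding mol_def delta_Lip0[OF F_Lip0] F_interpolates by auto
    then show "coefficients (synth_op x0 x y \<mu>) i = \<mu> i"
      unfolding coefficients_def synth_op_def by (simp add: infsum_if_eq)
  qed
qed

definition embedding :: "'a \<Rightarrow> 'i \<Rightarrow> real" where
  "embedding p = (\<lambda>i. F i p)"

lemma embedding_interpolates:
  "\<forall>p. embedding p \<in> ell_1" "embedding x0 = (\<lambda>i. 0)"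
  "\<exists>K. \<forall>p q. l1_norm (\<lambda>i. embedding p i - embedding q i) \<le> K * dist p q"
  "lip_const l1_norm embedding (\<lambda>u v i. u i - v i) \<le> N"
  "\<forall>i. (\<lambda>j. (embedding (x i) j - embedding (y i) j) / dist (x i) (y i)) = (\<lambda>j. if j = i then 1 else 0)"
proof -
  show "\<forall>p. embedding p \<in> ell_1"
    unfolding embedding_def ell_1_def using summable_abs_F by blast
  show "embedding x0 = (\<lambda>i. 0)"
    unfolding embedding_def using F_base_point by simp
  have Lipschitz: "l1_norm (\<lambda>i. embedding p i - embedding q i) \<le> N * dist p q" for p q
    unfolding l1_norm_def embedding_def by (rule infsum_abs_diff_le)
  then show "\<exists>K. \<forall>p q. l1_norm (\<lambda>i. embedding p i - embedding q i) \<le> K * dist p q"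
    by blast
  show "lip_const l1_norm embedding (\<lambda>u v i. u i - v i) \<le> N"
    unfolding lip_const_def
    by (rule cSup_least) (use Lipschitz one_le_constant in \<open>auto simp: divide_le_eq\<close>)
  show "\<forall>i. (\<lambda>j. (embedding (x i) j - embedding (y i) j) / dist (x i) (y i)) = (\<lambda>j. if j = i then 1 else 0)"
    unfolding embedding_def F_interpolates by auto
qed

lemma delta_span_extension:
  assumes "\<psi> \<in> delta_span x0" "\<alpha> \<in> ell_inf"
  shows "\<psi> (extension \<alpha>) = (\<Sum>\<^sub>\<infinity>i. \<alpha> i * \<psi> (F i))"
proof -
  obtain A c where \<psi>: "\<psi> = (\<lambda>f. \<Sum>p\<in>A. c p * delta x0 p f)" "finite A"
    using assms(1) unfolding delta_span_def by blast
  have summable: "(\<lambda>i. \<alpha> i * F i p) summable_on UNIV" for p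
    by (rule summable_on_ell_inf_mult(2)[OF assms(2) summable_abs_F])
  have "\<psi> (extension \<alpha>) = (\<Sum>p\<in>A. c p * extension \<alpha> p)"
    unfolding \<psi>(1) delta_Lip0[OF extension_Lip0[OF assms(2)]] ..
  also have "\<dots> = (\<Sum>p\<in>A. \<Sum>\<^sub>\<infinity>i. c p * (\<alpha> i * F i p))"
    unfolding extension_def by (simp add: infsum_cmult_right[OF summable])
  also have "\<dots> = (\<Sum>\<^sub>\<infinity>i. \<Sum>p\<in>A. c p * (\<alpha> i * F i p))"
    by (rule infsum_finite_sum[symmetric, OF \<psi>(2) summable_on_cmult_right[OF summable]])
  also have "\<dots> = (\<Sum>\<^sub>\<infinity>i. \<alpha> i * \<psi> (F i))"
    unfolding \<psi>(1) delta_Lip0[OF F_Lip0] by (simp add: sum_distrib_left mult.left_commute)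
  finally show ?thesis .
qed

lemma free_space_extension:
  assumes "\<phi> \<in> free_space x0" "\<alpha> \<in> ell_inf"
  shows "\<phi> (extension \<alpha>) = (\<Sum>\<^sub>\<infinity>i. \<alpha> i * \<phi> (F i))"
proof (rule eq_if_abs_diff_le_epsilon_mult)
  fix \<epsilon> :: real
  assume "\<epsilon> > 0"
  then obtain \<psi> where \<psi>: "\<psi> \<in> delta_span x0" "\<And>f. f \<in> Lip0 x0 \<Longrightarrow> \<bar>\<phi> f - \<psi> f\<bar> \<le> \<epsilon> * lipnorm f"
    using free_space_approx[OF assms(1)] by blast
  have \<psi>_free: "\<psi> \<in> free_space x0"
    using \<psi>(1) delta_span_subset_free_space by blast
  define L where "L g = \<phi> g - \<psi> g" for g
  have L_sum: "L (\<lambda>p. \<Sum>i\<in>G. c i * F i p) = (\<Sum>i\<in>G. c i * L (F i))" if "finite G" for G c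
    unfolding L_def free_space_sum[OF assms(1) that F_Lip0] free_space_sum[OF \<psi>_free that F_Lip0]
    by (simp add: sum_subtractf right_diff_distrib)
  have L_bound: "(\<lambda>i. \<bar>L (F i)\<bar>) summable_on UNIV" "(\<Sum>\<^sub>\<infinity>i. \<bar>L (F i)\<bar>) \<le> \<epsilon> * N"
    using summable_abs_functional_F[of L \<epsilon>, OF L_sum] \<psi>(2) \<open>\<epsilon> > 0\<close> unfolding L_def by auto
  have summable: "(\<lambda>i. \<alpha> i * \<theta> (F i)) summable_on UNIV" if "\<theta> \<in> free_space x0" for \<theta>
    by (rule summable_on_ell_inf_mult(2)[OF assms(2) summable_abs_free_space_F(1)[OF that]])
  have "(\<Sum>\<^sub>\<infinity>i. \<alpha> i * \<phi> (F i)) - (\<Sum>\<^sub>\<infinity>i. \<alpha> i * \<psi> (F i)) = (\<Sum>\<^sub>\<infinity>i. \<alpha> i * L (F i))"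
    unfolding L_def right_diff_distrib by (rule infsum_diff[symmetric, OF summable summable]) (fact assms(1) \<psi>_free)+
  also have "\<bar>\<dots>\<bar> \<le> linf_norm \<alpha> * (\<epsilon> * N)"
    using abs_infsum_ell_inf_mult_le[OF assms(2) L_bound(1)] mult_left_mono[OF L_bound(2) linf_norm_nonneg[OF assms(2)]]
    by linarith
  finally have "\<bar>(\<Sum>\<^sub>\<infinity>i. \<alpha> i * \<phi> (F i)) - \<psi> (extension \<alpha>)\<bar> \<le> linf_norm \<alpha> * (\<epsilon> * N)"
    unfolding delta_span_extension[OF \<psi>(1) assms(2)] .
  moreover have "\<bar>\<phi> (extension \<alpha>) - \<psi> (extension \<alpha>)\<bar> \<le> \<epsilon> * lipnorm (extension \<alpha>)"
    by (rule \<psi>(2)[OF extension_Lip0[OF assms(2)]])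
  ultimately show "\<bar>\<phi> (extension \<alpha>) - (\<Sum>\<^sub>\<infinity>i. \<alpha> i * \<phi> (F i))\<bar>
      \<le> \<epsilon> * (lipnorm (extension \<alpha>) + linf_norm \<alpha> * N)"
    by (simp add: algebra_simps)
qed

lemma continuous_map_extension: "continuous_map wstar_linf (wstar_lip x0) extension"
  unfolding wstar_lip_def
proof (rule continuous_on_generated_topo)
  fix V
  assume "V \<in> {{f\<in>Lip0 x0. \<phi> f \<in> U} | \<phi> U. \<phi> \<in> free_space x0 \<and> open U}"
  then obtain \<phi> U where V: "V = {f\<in>Lip0 x0. \<phi> f \<in> U}" and \<phi>: "\<phi> \<in> free_space x0" and "open U"
    by blast
  have "extension -` V \<inter> topspace wstar_linf = {\<alpha>\<in>ell_inf. (\<Sum>\<^sub>\<infinity>i. \<alpha> i * coefficients \<phi> i) \<in> U}"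
    unfolding topspace_wstar_linf V coefficients_def using free_space_extension[OF \<phi>] extension_Lip0 by auto
  moreover have "coefficients \<phi> \<in> ell_1"
    using coefficients_left_inverse(2) \<phi> by blast
  ultimately show "openin wstar_linf (extension -` V \<inter> topspace wstar_linf)"
    unfolding wstar_linf_def using \<open>open U\<close> by (intro topology_generated_by_Basis) auto
next
  show "extension ` topspace wstar_linf \<subseteq> \<Union> {{f\<in>Lip0 x0. \<phi> f \<in> U} | \<phi> U. \<phi> \<in> free_space x0 \<and> open U}"
    using topspace_wstar_lip[of x0] extension_Lip0 unfolding topspace_wstar_linf wstar_lip_def
    by (simp add: image_subset_iff)
qed

end

lemma interp_const_le_beurling_constant: "beurling_set x0 x y N F \<Longrightarrow> interp_const x0 x y \<le> N"
  by (rule beurling.interp_const_le[OF beurling.intro])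

section \<open>Beurling sets recovered from operators\<close>

lemma beurling_setI:
  assumes "\<And>i. F i x0 = 0"
    and "\<And>i j. (F i (x j) - F i (y j)) / dist (x j) (y j) = (if i = j then 1 else 0)"
    and "\<And>G p q. finite G \<Longrightarrow> (\<Sum>i\<in>G. \<bar>F i p - F i q\<bar>) \<le> N * dist p q"
  shows "beurling_set x0 x y N F"
proof -
  have "(\<lambda>i. \<bar>F i p - F i q\<bar> / dist p q) summable_on UNIV \<and> (\<Sum>\<^sub>\<infinity>i. \<bar>F i p - F i q\<bar> / dist p q) \<le> N"
    if "p \<noteq> q" for p q
  proof -
    have "(\<Sum>i\<in>G. \<bar>F i p - F i q\<bar> / dist p q) \<le> N" if "finite G" for G
      using assms(3)[OF that, of p q] \<open>p \<noteq> q\<close> by (simp add: sum_divide_distrib[symmetric] divide_le_eq)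
    then show ?thesis
      using nonneg_summable_on_infsum_le[of "\<lambda>i. \<bar>F i p - F i q\<bar> / dist p q" N] by auto
  qed
  then show ?thesis
    unfolding beurling_set_def using assms(1,2) by blast
qed

lemma beurling_set_mono: "beurling_set x0 x y N F \<Longrightarrow> N \<le> N' \<Longrightarrow> beurling_set x0 x y N' F"
  unfolding beurling_set_def by (meson order_trans)

lemma linear_on_basis_comb:
  assumes "c_0 \<subseteq> A" "linear_on A R" "finite G"
  shows "R (\<lambda>j. \<Sum>i\<in>G. c i * basis_seq i j) = (\<lambda>p. \<Sum>i\<in>G. c i * R (basis_seq i) p)"
  using assms(3)
proof (induction G rule: finite_induct)
  case empty
  have "basis_seq undefined \<in> A"
    by (rule subsetD[OF assms(1) basis_seq_in_c_0])
  then have "R (\<lambda>s. 0) = (\<lambda>t. 0)"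
    by (rule linear_on_zero[OF assms(2)])
  then show ?case
    by simp
next
  case (insert k G)
  have "basis_seq k \<in> A"
    by (rule subsetD[OF assms(1) basis_seq_in_c_0])
  then have "R (\<lambda>s. 1 * (\<Sum>i\<in>G. c i * basis_seq i s) + c k * basis_seq k s)
      = (\<lambda>t. 1 * R (\<lambda>j. \<Sum>i\<in>G. c i * basis_seq i j) t + c k * R (basis_seq k) t)"
    using assms(1) finite_basis_comb_in_c_0[OF insert(1)] by (intro linear_onD[OF assms(2)]) auto
  then show ?case
    using insert by (simp add: add.commute)
qed

text \<open>Testing the operator norm on the sign vector of the increments gives the Beurling estimate.\<close>

lemma sum_abs_right_inverse_basis_le:
  fixes R :: "('i \<Rightarrow> real) \<Rightarrow> ('a::metric_space \<Rightarrow> real)"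
  assumes "c_0 \<subseteq> A" "A \<subseteq> ell_inf" "linear_on A R" "R ` A \<subseteq> Lip0 x0"
    and "bounded_on A linf_norm lipnorm R" "finite G"
  shows "(\<Sum>i\<in>G. \<bar>R (basis_seq i) p - R (basis_seq i) q\<bar>) \<le> opnorm_on A linf_norm lipnorm R * dist p q"
proof -
  have nonneg: "\<And>u. u \<in> A \<Longrightarrow> 0 \<le> linf_norm u"
    using assms(2) linf_norm_nonneg by blast
  define s where "s i = sgn (R (basis_seq i) p - R (basis_seq i) q)" for i
  define v where "v = (\<lambda>j. \<Sum>i\<in>G. s i * basis_seq i j)"
  have v: "v \<in> A"
    unfolding v_def using assms(1) finite_basis_comb_in_c_0[OF assms(6)] by blast
  have "linf_norm v \<le> 1"
    by (rule linf_norm_le) (auto simp: v_def sum_basis_seq[OF assms(6)] s_def abs_sgn_eq)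
  have "(\<Sum>i\<in>G. \<bar>R (basis_seq i) p - R (basis_seq i) q\<bar>) = R v p - R v q"
    unfolding v_def linear_on_basis_comb[OF assms(1,3,6)] s_def
    by (simp add: abs_sgn sum_subtractf left_diff_distrib mult.commute)
  also have "\<dots> \<le> lipnorm (R v) * dist p q"
    using abs_diff_le_lipnorm[of "R v" x0 p q] assms(4) v by auto
  also have "\<dots> \<le> opnorm_on A linf_norm lipnorm R * linf_norm v * dist p q"
    by (rule mult_right_mono[OF le_opnorm[OF assms(5) nonneg v] zero_le_dist])
  also have "\<dots> \<le> opnorm_on A linf_norm lipnorm R * 1 * dist p q"
    by (intro mult_right_mono mult_left_mono \<open>linf_norm v \<le> 1\<close> opnorm_nonneg[OF assms(5) nonneg]) simp_all
  also have "\<dots> = opnorm_on A linf_norm lipnorm R * dist p q"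
    by simp
  finally show ?thesis .
qed

lemma beurling_set_of_right_inverse:
  fixes R :: "('i \<Rightarrow> real) \<Rightarrow> ('a::metric_space \<Rightarrow> real)"
  assumes "c_0 \<subseteq> A" "A \<subseteq> ell_inf" "linear_on A R" "R ` A \<subseteq> Lip0 x0"
    and "bounded_on A linf_norm lipnorm R" "\<forall>\<alpha>\<in>A. interp_op x y (R \<alpha>) = \<alpha>"
  shows "beurling_set x0 x y (opnorm_on A linf_norm lipnorm R) (\<lambda>i. R (basis_seq i))"
proof (rule beurling_setI)
  have basis: "basis_seq i \<in> A" for i
    by (rule subsetD[OF assms(1) basis_seq_in_c_0])
  show "R (basis_seq i) x0 = 0" for i
    using assms(4) basis Lip0_base_point by blast
  show "(R (basis_seq i) (x j) - R (basis_seq i) (y j)) / dist (x j) (y j) = (if i = j then 1 else 0)" for i j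
  proof -
    have "interp_op x y (R (basis_seq i)) j = basis_seq i j"
      using assms(6) basis[of i] by simp
    then show ?thesis
      unfolding interp_op_def basis_seq_def by (simp add: eq_commute[of j i])
  qed
qed (rule sum_abs_right_inverse_basis_le[OF assms(1-5)])

lemma beurling_set_of_left_inverse:
  fixes P :: "(('a::metric_space \<Rightarrow> real) \<Rightarrow> real) \<Rightarrow> ('i \<Rightarrow> real)"
  assumes "linear_on (free_space x0) P" "P ` free_space x0 \<subseteq> ell_1"
    and "bounded_on (free_space x0) (dual_norm x0) l1_norm P" "\<forall>\<mu>\<in>ell_1. P (synth_op x0 x y \<mu>) = \<mu>"
  shows "beurling_set x0 x y (opnorm_on (free_space x0) (dual_norm x0) l1_norm P) (\<lambda>i p. P (delta x0 p) i)"
proof (rule beurling_setI)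
  define N where "N = opnorm_on (free_space x0) (dual_norm x0) l1_norm P"
  have P_mol: "P (mol x0 p q) i = (P (delta x0 p) i - P (delta x0 q) i) / dist p q" for p q i
  proof -
    have "P (mol x0 p q) = (\<lambda>t. (1 / dist p q) * P (delta x0 p) t + (- 1 / dist p q) * P (delta x0 q) t)"
      unfolding mol_eq_delta_lincomb by (rule linear_onD[OF assms(1) delta_in_free_space delta_in_free_space])
    then show ?thesis
      by (simp add: diff_divide_distrib)
  qed
  show "P (delta x0 x0) i = 0" for i
    using linear_on_zero[OF assms(1) delta_in_free_space] by (simp add: delta_base_point)
  show "(P (delta x0 (x j)) i - P (delta x0 (y j)) i) / dist (x j) (y j) = (if i = j then 1 else 0)" for i j
  proof -
    have "synth_op x0 x y (basis_seq j) = mol x0 (x j) (y j)"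
      unfolding synth_op_def basis_seq_def by (simp add: if_distrib[of "\<lambda>c. c * _"] infsum_if_eq cong: if_cong)
    moreover have "basis_seq j \<in> ell_1"
      by (rule basis_seq_in_ell_1)
    ultimately have "P (mol x0 (x j) (y j)) = basis_seq j"
      using assms(4) by metis
    then show ?thesis
      unfolding P_mol[symmetric] basis_seq_def by (simp add: eq_commute[of j i])
  qed
  show "(\<Sum>i\<in>G. \<bar>P (delta x0 p) i - P (delta x0 q) i\<bar>) \<le> N * dist p q" if "finite G" for G p q
  proof (cases "p = q")
    case False
    have "(\<Sum>i\<in>G. \<bar>P (delta x0 p) i - P (delta x0 q) i\<bar>) = dist p q * (\<Sum>i\<in>G. \<bar>P (mol x0 p q) i\<bar>)"
      unfolding P_mol using False by (simp add: abs_mult sum_distrib_left)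
    also have "\<dots> \<le> dist p q * l1_norm (P (mol x0 p q))"
      by (intro mult_left_mono sum_abs_le_l1_norm[OF _ that] subsetD[OF assms(2) imageI[OF mol_in_free_space]])
        simp_all
    also have "\<dots> \<le> dist p q * (N * dual_norm x0 (mol x0 p q))"
      unfolding N_def by (intro mult_left_mono le_opnorm[OF assms(3) dual_norm_nonneg mol_in_free_space]) simp_all
    finally show ?thesis
      by (simp add: dual_norm_mol[OF False] mult.commute)
  qed simp
qed

lemma beurling_set_of_Lipschitz_embedding:
  fixes f :: "'a::metric_space \<Rightarrow> ('i \<Rightarrow> real)"
  assumes "\<forall>p. f p \<in> ell_1" "f x0 = (\<lambda>i. 0)"
    and "\<exists>K. \<forall>p q. l1_norm (\<lambda>i. f p i - f q i) \<le> K * dist p q"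
    and "\<forall>i. (\<lambda>j. (f (x i) j - f (y i) j) / dist (x i) (y i)) = (\<lambda>j. if j = i then 1 else 0)"
  shows "beurling_set x0 x y (lip_const l1_norm f (\<lambda>u v i. u i - v i)) (\<lambda>i p. f p i)"
proof (rule beurling_setI)
  show "f x0 i = 0" for i
    using assms(2) by simp
  show "(f (x j) i - f (y j) i) / dist (x j) (y j) = (if i = j then 1 else 0)" for i j
    using fun_cong[OF assms(4)[rule_format, of j], of i] by simp
  obtain K where K: "\<And>p q. l1_norm (\<lambda>i. f p i - f q i) \<le> K * dist p q"
    using assms(3) by blast
  show "(\<Sum>i\<in>G. \<bar>f p i - f q i\<bar>) \<le> lip_const l1_norm f (\<lambda>u v i. u i - v i) * dist p q"
    if "finite G" for G p q
  proof (cases "p = q")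
    case False
    have "l1_norm (\<lambda>i. f p i - f q i) / dist p q \<le> lip_const l1_norm f (\<lambda>u v i. u i - v i)"
      unfolding lip_const_def
      by (rule cSup_upper[OF _ bdd_above_Lipschitz_ratios[where sub = "\<lambda>u v i. u i - v i", OF K]])
        (use False in auto)
    then have Lipschitz: "l1_norm (\<lambda>i. f p i - f q i) \<le> lip_const l1_norm f (\<lambda>u v i. u i - v i) * dist p q"
      using False by (simp add: divide_le_eq)
    have "(\<Sum>i\<in>G. \<bar>f p i - f q i\<bar>) \<le> l1_norm (\<lambda>i. f p i - f q i)"
      by (rule sum_abs_le_l1_norm[OF ell_1_diff[OF assms(1)[rule_format] assms(1)[rule_format]] that])
    also note Lipschitz
    finally show ?thesis .
  qed simp
qed

lemma beurling_set_iff_weak_star_right_inverse: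
  fixes x0 :: "'a::metric_space" and x y :: "'i \<Rightarrow> 'a"
  assumes "M = interp_const x0 x y"
  shows "(\<exists>F. beurling_set x0 x y M F) \<longleftrightarrow> (\<exists>R :: ('i \<Rightarrow> real) \<Rightarrow> ('a \<Rightarrow> real).
    linear_on ell_inf R \<and> R ` ell_inf \<subseteq> Lip0 x0 \<and> bounded_on ell_inf linf_norm lipnorm R \<and>
    continuous_map wstar_linf (wstar_lip x0) R \<and> opnorm_on ell_inf linf_norm lipnorm R = M \<and>
    (\<forall>\<alpha>\<in>ell_inf. interp_op x y (R \<alpha>) = \<alpha>))"
    (is "_ \<longleftrightarrow> ?rhs")
proof
  assume "\<exists>F. beurling_set x0 x y M F"
  then obtain F where "beurling x0 x y M F"
    by (auto intro: beurling.intro)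
  then interpret beurling x0 x y M F .
  note R = extension_right_inverse[OF order_refl]
  have "M \<le> opnorm_on ell_inf linf_norm lipnorm extension"
    unfolding assms
    by (rule interp_const_le_beurling_constant[OF beurling_set_of_right_inverse[OF c_0_subset_ell_inf order_refl R(1,2,3,5)]])
  then have "opnorm_on ell_inf linf_norm lipnorm extension = M"
    using R(4) by simp
  with R(1,2,3,5) continuous_map_extension show ?rhs
    by (intro exI[of _ extension] conjI) assumption+
qed (auto dest: beurling_set_of_right_inverse[OF c_0_subset_ell_inf order_refl])

lemma beurling_set_iff_left_inverse:
  fixes x0 :: "'a::metric_space" and x y :: "'i \<Rightarrow> 'a"
  assumes "M = interp_const x0 x y"
  shows "(\<exists>F. beurling_set x0 x y M F) \<longleftrightarrow> (\<exists>P :: (('a \<Rightarrow> real) \<Rightarrow> real) \<Rightarrow> ('i \<Rightarrow> real).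
    linear_on (free_space x0) P \<and> P ` free_space x0 \<subseteq> ell_1 \<and>
    bounded_on (free_space x0) (dual_norm x0) l1_norm P \<and>
    opnorm_on (free_space x0) (dual_norm x0) l1_norm P = M \<and> (\<forall>\<mu>\<in>ell_1. P (synth_op x0 x y \<mu>) = \<mu>))"
    (is "_ \<longleftrightarrow> ?rhs")
proof
  assume "\<exists>F. beurling_set x0 x y M F"
  then obtain F where "beurling x0 x y M F"
    by (auto intro: beurling.intro)
  then interpret beurling x0 x y M F .
  note P = coefficients_left_inverse
  have "M \<le> opnorm_on (free_space x0) (dual_norm x0) l1_norm coefficients"
    unfolding assms
    by (rule interp_const_le_beurling_constant[OF beurling_set_of_left_inverse[OF P(1,2,3,5)]])
  then have "opnorm_on (free_space x0) (dual_norm x0) l1_norm coefficients = M"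
    using P(4) by simp
  with P(1,2,3,5) show ?rhs
    by (intro exI[of _ coefficients] conjI) assumption+
qed (auto dest: beurling_set_of_left_inverse)

lemma beurling_set_iff_Lipschitz_embedding:
  fixes x0 :: "'a::metric_space" and x y :: "'i \<Rightarrow> 'a"
  assumes "M = interp_const x0 x y"
  shows "(\<exists>F. beurling_set x0 x y M F) \<longleftrightarrow> (\<exists>f :: 'a \<Rightarrow> ('i \<Rightarrow> real).
    (\<forall>p. f p \<in> ell_1) \<and> f x0 = (\<lambda>i. 0) \<and>
    (\<exists>K. \<forall>p q. l1_norm (\<lambda>i. f p i - f q i) \<le> K * dist p q) \<and>
    lip_const l1_norm f (\<lambda>u v i. u i - v i) = M \<and>
    (\<forall>i. (\<lambda>j. (f (x i) j - f (y i) j) / dist (x i) (y i)) = (\<lambda>j. if j = i then 1 else 0)))"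
    (is "_ \<longleftrightarrow> ?rhs")
proof
  assume "\<exists>F. beurling_set x0 x y M F"
  then obtain F where "beurling x0 x y M F"
    by (auto intro: beurling.intro)
  then interpret beurling x0 x y M F .
  note f = embedding_interpolates
  have "M \<le> lip_const l1_norm embedding (\<lambda>u v i. u i - v i)"
    unfolding assms
    by (rule interp_const_le_beurling_constant[OF beurling_set_of_Lipschitz_embedding[OF f(1,2,3,5)]])
  then have "lip_const l1_norm embedding (\<lambda>u v i. u i - v i) = M"
    using f(4) by simp
  with f(1,2,3,5) show ?rhs
    by (intro exI[of _ embedding] conjI) assumption+
qed (auto dest: beurling_set_of_Lipschitz_embedding)

lemma beurling_set_iff_c_0_right_inverse:
  fixes x0 :: "'a::metric_space" and x y :: "'i \<Rightarrow> 'a"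
  shows "(\<exists>F. beurling_set x0 x y M F) \<longleftrightarrow> (\<exists>R0 :: ('i \<Rightarrow> real) \<Rightarrow> ('a \<Rightarrow> real).
    linear_on c_0 R0 \<and> R0 ` c_0 \<subseteq> Lip0 x0 \<and> bounded_on c_0 linf_norm lipnorm R0 \<and>
    opnorm_on c_0 linf_norm lipnorm R0 \<le> M \<and> (\<forall>\<alpha>\<in>c_0. interp_op x y (R0 \<alpha>) = \<alpha>))"
    (is "_ \<longleftrightarrow> ?rhs")
proof
  assume "\<exists>F. beurling_set x0 x y M F"
  then obtain F where "beurling x0 x y M F"
    by (auto intro: beurling.intro)
  then interpret beurling x0 x y M F .
  from extension_right_inverse[OF c_0_subset_ell_inf] show ?rhs
    by (intro exI[of _ extension] conjI) assumption+
next
  assume ?rhs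
  then obtain R0 :: "('i \<Rightarrow> real) \<Rightarrow> ('a \<Rightarrow> real)" where R0: "linear_on c_0 R0" "R0 ` c_0 \<subseteq> Lip0 x0"
    "bounded_on c_0 linf_norm lipnorm R0" "opnorm_on c_0 linf_norm lipnorm R0 \<le> M"
    "\<forall>\<alpha>\<in>c_0. interp_op x y (R0 \<alpha>) = \<alpha>"
    by blast
  show "\<exists>F. beurling_set x0 x y M F"
    using beurling_set_mono[OF beurling_set_of_right_inverse[OF order_refl c_0_subset_ell_inf R0(1,2,3,5)] R0(4)]
    by (rule exI[where x = "\<lambda>i. R0 (basis_seq i)"])
qed

theorem theorem3p12:
  fixes x0 :: "'a::metric_space" and x y :: "'i \<Rightarrow> 'a" and M :: real
  assumes interp: "lip_interpolating x0 x y"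
    and M_def: "M = interp_const x0 x y"
  defines "T \<equiv> interp_op x y" and "S \<equiv> synth_op x0 x y"
  shows
   "let
      c1 = (\<exists>F. beurling_set x0 x y M F);
      c2 = (\<exists>R :: ('i \<Rightarrow> real) \<Rightarrow> ('a \<Rightarrow> real).
              linear_on ell_inf R \<and> R ` ell_inf \<subseteq> Lip0 x0 \<and>
              bounded_on ell_inf linf_norm lipnorm R \<and>
              continuous_map wstar_linf (wstar_lip x0) R \<and>
              opnorm_on ell_inf linf_norm lipnorm R = M \<and>
              (\<forall>\<alpha>\<in>ell_inf. T (R \<alpha>) = \<alpha>));
      c3 = (\<exists>P :: (('a \<Rightarrow> real) \<Rightarrow> real) \<Rightarrow> ('i \<Rightarrow> real).
              linear_on (free_space x0) P \<and> P ` free_space x0 \<subseteq> ell_1 \<and>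
              bounded_on (free_space x0) (dual_norm x0) l1_norm P \<and>
              opnorm_on (free_space x0) (dual_norm x0) l1_norm P = M \<and>
              (\<forall>\<mu>\<in>ell_1. P (S \<mu>) = \<mu>));
      c4 = (\<exists>f :: 'a \<Rightarrow> ('i \<Rightarrow> real).
              (\<forall>p. f p \<in> ell_1) \<and> f x0 = (\<lambda>i. 0) \<and>
              (\<exists>K. \<forall>p q. l1_norm (\<lambda>i. f p i - f q i) \<le> K * dist p q) \<and>
              lip_const l1_norm f (\<lambda>u v i. u i - v i) = M \<and>
              (\<forall>i. (\<lambda>j. (f (x i) j - f (y i) j) / dist (x i) (y i)) = (\<lambda>j. if j = i then 1 else 0)));
      c5 = (\<exists>R0 :: ('i \<Rightarrow> real) \<Rightarrow> ('a \<Rightarrow> real).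
              linear_on c_0 R0 \<and> R0 ` c_0 \<subseteq> Lip0 x0 \<and>
              bounded_on c_0 linf_norm lipnorm R0 \<and>
              opnorm_on c_0 linf_norm lipnorm R0 \<le> M \<and>
              (\<forall>\<alpha>\<in>c_0. T (R0 \<alpha>) = \<alpha>))
    in (c1 \<longleftrightarrow> c2) \<and> (c1 \<longleftrightarrow> c3) \<and> (c1 \<longleftrightarrow> c4) \<and> (c1 \<longleftrightarrow> c5)"
proof -
  show ?thesis
    unfolding Let_def T_def S_def
    by (intro conjI beurling_set_iff_weak_star_right_inverse[OF M_def] beurling_set_iff_left_inverse[OF M_def]
        beurling_set_iff_Lipschitz_embedding[OF M_def] beurling_set_iff_c_0_right_inverse)
qed

end
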